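(* Let $\eta\in(0.5,1)$. Consider the discrete-time system $x_{k+1}=f(x_k)+G(x_k)u_k+w_k$, $k=0,1,\dots,T$, with state $x_k\in\mathbb{R}^n$ (directly observed), input $u_k\in\mathbb{R}^m$, disturbance $w_k\in\mathbb{R}^n$, unknown $f:\mathbb{R}^n\to\mathbb{R}^n$, $G:\mathbb{R}^n\to\mathbb{R}^{n\times m}$, and state constraints $Hx\preceq d$ with $H=[h_1,\dots,h_{n_c}]^\top\in\mathbb{R}^{n_c\times n}$, $d=[d_1,\dots,d_{n_c}]^\top$; let $\mathcal{X}_s=\{x: Hx\preceq d\}$ and assume $x_0\in\mathcal{X}_s$. Assume: (A1) matrices $A\in\mathbb{R}^{n\times n}$, $B\in\mathbb{R}^{n\times m}$ are known, with approximation error $e(x,u):=f(x)+G(x)u-(Ax+Bu)$; (A2) $w_k\sim\mathcal{N}(\mu_w,\Sigma_w)$ with known $\mu_w,\Sigma_w$, and $w_k$ is uncorrelated with the exploration term $\varepsilon_k$; (A3) for a positive integer $\tau$, finite known $\bar\delta_j\ge\sup_{x,u}|h_j^\top e(x,u)|$ and $\bar\Delta_j\ge\sup_{x,u}|h_j^\top(A^{\tau-1}+\cdots+I)e(x,u)|$, $j=1,\dots,n_c$; (A4) $h_j^\top B\ne0$ for all $j=1,\dots,n_c$. Let $\xi$ be a real number with $\eta^{1/T}<\xi<1$, and define $\hat x_{k+1}:=Ax_k+B\mu(x_k;\theta_k)+\mu_w$ and $\eta'_k:=1-\frac{1-(\eta/\xi^k)^{1/\tau}}{n_c}$. Determine the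 input by: (i) if $x_k\in\mathcal{X}_s$ and $\|h_j^\top\Sigma_w^{1/2}\|_2\le\frac{1}{\Phi^{-1}(\eta'_k)}(d_j-h_j^\top\hat x_{k+1}-\delta_j)$ for all $\delta_j\in\{\pm\bar\delta_j\}$ and all $j$, set $u_k=\mu(x_k;\theta_k)+\varepsilon_k$ with $\varepsilon_k\sim\mathcal{N}(0,\Sigma_k)$, where $\Sigma_k$ is chosen to satisfy, for all $j$ and all $\delta_j\in\{\pm\bar\delta_j\}$, $$\left\|h_j^\top[B,\ I]\begin{bmatrix}\Sigma_k&0\\0&\Sigma_w\end{bmatrix}^{1/2}\right\|_2\le\frac{1}{\Phi^{-1}(\eta'_k)}(d_j-h_j^\top\hat x_{k+1}-\delta_j);$$ (ii) if $x_k\in\mathcal{X}_s$ and the inequality in (i) fails for some $j$ and some $\delta_j\in\{\pm\bar\delta_j\}$, set $u_k=u_k^{stay}$, a conservative input of the first kind, i.e. one with which $\Pr\{Hx_{k+1}\preceq d\}\ge(\eta/\xi^k)^{1/\tau}$ holds when $x_k\in\mathcal{X}_s$; (iii) if $x_k\notin\mathcal{X}_s$, set $u_k=u_k^{back}$, using a sequence of conservative inputs of the second kind $u_k^{back},u_{k+1}^{back},\dots,u_{k+\tau-1}^{back}$, i.e. inputs with which, when $x_k\notin\mathcal{X}_s$ occurs at time $k\ge1$, $\Pr\{x_{k+j}\in\mathcal{X}_s\}\ge\xi$ holds for some $j\le\tau$. Then $\Pr\{Hx_k\preceq d\}\ge\eta$ holds for every $k=1,2,\dots,T$.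
   Context: $\Phi$ is the standard normal cumulative distribution function; $\preceq$ is componentwise $\le$; $M^{1/2}$ is the matrix square root of a positive semidefinite matrix; $\|\cdot\|_2$ is the Euclidean norm. $\mu(\cdot;\theta):\mathbb{R}^n\to\mathbb{R}^m$ is a deterministic base policy whose parameter $\theta_k$ at time $k$ may be updated by a reinforcement learning algorithm. $T$ is the terminal time. The conservative inputs $u_k^{stay}$ and $u_k^{back}$ are assumed to be available with the stated properties. *)

theory Defs
  imports "HOL-Probability.Probability"
begin

definition Phi :: "real \<Rightarrow> real" where
  "Phi x = measure (density lborel std_normal_density) {..x}"

definition Phi_inv :: "real \<Rightarrow> real" where
  "Phi_inv p = (THE x. Phi x = p)"

primrec matpow :: "real^'n^'n \<Rightarrow> nat \<Rightarrow> real^'n^'n" where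
  "matpow A 0 = mat 1"
| "matpow A (Suc i) = A ** matpow A i"

definition psd :: "real^'n^'n \<Rightarrow> bool" where
  "psd S \<longleftrightarrow> transpose S = S \<and> (\<forall>x. 0 \<le> x \<bullet> (S *v x))"

definition msqrt :: "real^'n^'n \<Rightarrow> real^'n^'n" where
  "msqrt S = (THE R. psd R \<and> R ** R = S)"

text \<open>Block matrices used in the exploration condition:
  [B, I] and diag(Sigma_k, Sigma_w), indexed by the sum type 'm + 'n.\<close>
definition BI :: "real^'m^'n \<Rightarrow> real^('m + 'n)^'n" where
  "BI B = (\<chi> r c. case c of Inl a \<Rightarrow> B $ r $ a | Inr b \<Rightarrow> (if r = b then 1 else 0))"

definition blockdiag :: "real^'m^'m \<Rightarrow> real^'n^'n \<Rightarrow> real^('m + 'n)^('m + 'n)" where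
  "blockdiag S W = (\<chi> r c. case (r, c) of
      (Inl a, Inl b) \<Rightarrow> S $ a $ b
    | (Inr a, Inr b) \<Rightarrow> W $ a $ b
    | _ \<Rightarrow> 0)"

definition Xs :: "real^'n^'c \<Rightarrow> real^'c \<Rightarrow> (real^'n) set" where
  "Xs H d = {x. \<forall>j. (H *v x) $ j \<le> d $ j}"

definition gauss_cdf :: "real \<Rightarrow> real \<Rightarrow> real \<Rightarrow> real" where
  "gauss_cdf m v t = (if v = 0 then (if m \<le> t then 1 else 0) else Phi ((t - m) / sqrt v))"

definition cprob :: "'a measure \<Rightarrow> 'a measure \<Rightarrow> ('a \<Rightarrow> bool) \<Rightarrow> 'a \<Rightarrow> real" where
  "cprob M F P = real_cond_exp M F (indicator {\<omega> \<in> space M. P \<omega>})"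

end

theory Submission
  imports Defs
begin

(*
  Call the state safe at time k if H x_k <= d.  From a safe state one step keeps the state safe
  with conditional probability at least q = eta^(1/tau): under exploration the model error moves
  each constraint by at most delta_j, so the covariance condition is a Gaussian tail bound giving
  every constraint conditional probability at least eta'_k, and the union bound over the n_c
  constraints turns this into (eta / xi^k)^(1/tau) >= q; otherwise the conservative input
  provides this bound directly.  Chaining, a safe state stays safe for n further steps with
  probability at least q^n.  For K <= tau this bounds the probability of being safe at time K
  from the safe initial state.  For K > tau split at time K - tau: safe states stay safe for tau
  steps, and unsafe ones are grouped by the first j <= tau at which the backup inputs give
  conditional return probability xi >= q; they then stay safe for the remaining tau - j steps.
  Either way the probability is at least q^tau = eta.
*)

section \<open>Square roots of positive semidefinite matrices\<close>

lemma quadratic_nonneg_imp_discriminant_le: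
  fixes a b c :: real
  assumes nonneg: "\<And>t. 0 \<le> a + 2 * b * t + c * t\<^sup>2" and "0 \<le> c"
  shows "b\<^sup>2 \<le> a * c"
proof (cases "c = 0")
  case True
  have "b = 0"
  proof (rule ccontr)
    assume "b \<noteq> 0"
    have "0 \<le> a + 2 * b * (-(a + 1) / (2 * b)) + c * (-(a + 1) / (2 * b))\<^sup>2" by (rule nonneg)
    also have "\<dots> = -1" using \<open>b \<noteq> 0\<close> True by (simp add: field_simps)
    finally show False by simp
  qed
  then show ?thesis using True by simp
next
  case False
  then have "0 < c" using \<open>0 \<le> c\<close> by simp
  have "0 \<le> a + 2 * b * (-b / c) + c * (-b / c)\<^sup>2" by (rule nonneg)
  also have "\<dots> = a - b\<^sup>2 / c" using \<open>0 < c\<close> by (simp add: field_simps power2_eq_square)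
  finally show ?thesis using \<open>0 < c\<close> by (simp add: field_simps mult.commute)
qed

lemma matrix_add_rdistrib: "(A + B) ** C = A ** C + B ** (C :: 'a::semiring_1^'p^'n)"
  by (simp add: matrix_matrix_mult_def vec_eq_iff sum.distrib algebra_simps)

lemma matrix_diff_rdistrib: "(A - B) ** C = A ** C - B ** (C :: 'a::ring_1^'p^'n)"
  by (simp add: matrix_matrix_mult_def vec_eq_iff sum_subtractf algebra_simps)

lemma matrix_diff_ldistrib: "C ** (A - B) = C ** A - C ** (B :: 'a::ring_1^'p^'n)"
  by (simp add: matrix_matrix_mult_def vec_eq_iff sum_subtractf algebra_simps)

lemma transpose_add: "transpose (A + B) = transpose A + transpose B"
  by (simp add: transpose_def vec_eq_iff)

lemma transpose_diff: "transpose (A - B) = transpose A - transpose (B :: 'a::ab_group_add^'n^'m)"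
  by (simp add: transpose_def vec_eq_iff)

lemma inner_symmetric_matrix:
  "transpose P = P \<Longrightarrow> x \<bullet> (P *v y) = (P *v x) \<bullet> (y :: real^'n)"
  by (metis dot_lmul_matrix transpose_matrix_vector)

lemma psd_cauchy_schwarz:
  assumes "psd P"
  shows "(x \<bullet> (P *v y))\<^sup>2 \<le> (x \<bullet> (P *v x)) * (y \<bullet> (P *v y))"
proof (rule quadratic_nonneg_imp_discriminant_le)
  have sym: "y \<bullet> (P *v x) = x \<bullet> (P *v y)"
    using assms inner_symmetric_matrix[of P y x] by (simp add: psd_def inner_commute)
  fix t :: real
  have "0 \<le> (x + t *\<^sub>R y) \<bullet> (P *v (x + t *\<^sub>R y))" using assms by (simp add: psd_def)
  also have "\<dots> = x \<bullet> (P *v x) + 2 * (x \<bullet> (P *v y)) * t + (y \<bullet> (P *v y)) * t\<^sup>2"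
    using sym by (simp add: algebra_simps inner_add_left inner_add_right power2_eq_square)
  finally show "0 \<le> x \<bullet> (P *v x) + 2 * (x \<bullet> (P *v y)) * t + (y \<bullet> (P *v y)) * t\<^sup>2" .
qed (use assms in \<open>simp add: psd_def\<close>)

lemma psd_mult_eq_0_of_form_eq_0:
  assumes "psd P" "y \<bullet> (P *v y) = 0"
  shows "P *v y = 0"
proof -
  have "((P *v y) \<bullet> (P *v y))\<^sup>2 \<le> ((P *v y) \<bullet> (P *v (P *v y))) * (y \<bullet> (P *v y))"
    using psd_cauchy_schwarz[OF assms(1)] .
  then show ?thesis using assms(2) by simp
qed

lemma psd_contraction:
  assumes P: "psd P" and le: "\<And>x. x \<bullet> (P *v x) \<le> x \<bullet> x"
  shows "(P *v x) \<bullet> (P *v x) \<le> x \<bullet> x"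
proof -
  let ?y = "P *v x"
  have "(?y \<bullet> ?y)\<^sup>2 = (x \<bullet> (P *v ?y))\<^sup>2"
    using P inner_symmetric_matrix[of P x ?y] by (simp add: psd_def)
  also have "\<dots> \<le> (x \<bullet> (P *v x)) * (?y \<bullet> (P *v ?y))" by (rule psd_cauchy_schwarz[OF P])
  also have "\<dots> \<le> (x \<bullet> x) * (?y \<bullet> ?y)"
    using P le by (intro mult_mono) (auto simp: psd_def)
  finally show ?thesis
    by (cases "?y \<bullet> ?y = 0") (auto simp: power2_eq_square)
qed

lemma matpow_add: "matpow B (i + j) = matpow B i ** matpow B j"
  by (induction i) (auto simp: matrix_mul_assoc)

lemma matpow_commute: "X ** B = B ** X \<Longrightarrow> X ** matpow B i = matpow B i ** X"
proof (induction i)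
  case (Suc i)
  have "X ** matpow B (Suc i) = B ** (X ** matpow B i)"
    by (simp add: matrix_mul_assoc Suc.prems)
  also have "\<dots> = matpow B (Suc i) ** X" by (simp add: Suc matrix_mul_assoc)
  finally show ?case .
qed simp

lemma transpose_matpow: "transpose B = B \<Longrightarrow> transpose (matpow B i) = matpow B i"
  by (induction i) (simp_all add: matrix_transpose_mul matpow_commute)

lemma psd_matpow:
  assumes "psd B" shows "psd (matpow B i)"
proof -
  have sym: "transpose (matpow B j) = matpow B j" for j
    using assms transpose_matpow by (auto simp: psd_def)
  have "0 \<le> x \<bullet> (matpow B i *v x)" for x
  proof -
    let ?h = "i div 2"
    let ?y = "matpow B ?h *v x"
    have "i = ?h + ?h \<or> i = ?h + Suc ?h" by presburger
    then show ?thesis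
    proof
      assume "i = ?h + ?h"
      then have "x \<bullet> (matpow B i *v x) = x \<bullet> (matpow B ?h *v ?y)"
        by (metis matpow_add matrix_vector_mul_assoc)
      also have "\<dots> = ?y \<bullet> ?y" by (rule inner_symmetric_matrix[OF sym])
      finally show ?thesis by simp
    next
      assume "i = ?h + Suc ?h"
      then have "x \<bullet> (matpow B i *v x) = x \<bullet> (matpow B ?h *v (B *v ?y))"
        by (metis matpow_add matpow.simps(2) matrix_vector_mul_assoc)
      also have "\<dots> = ?y \<bullet> (B *v ?y)" by (rule inner_symmetric_matrix[OF sym])
      finally show ?thesis using assms by (simp add: psd_def)
    qed
  qed
  then show ?thesis using sym by (simp add: psd_def)
qed

inductive_set nonneg_matpoly :: "real^'n^'n \<Rightarrow> (real^'n^'n) set" for B where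
  matpow: "matpow B i \<in> nonneg_matpoly B"
| add: "P \<in> nonneg_matpoly B \<Longrightarrow> Q \<in> nonneg_matpoly B \<Longrightarrow> P + Q \<in> nonneg_matpoly B"
| scaleR: "0 \<le> c \<Longrightarrow> P \<in> nonneg_matpoly B \<Longrightarrow> c *\<^sub>R P \<in> nonneg_matpoly B"
| zero: "0 \<in> nonneg_matpoly B"

lemma nonneg_matpoly_self: "B \<in> nonneg_matpoly B"
  using nonneg_matpoly.matpow[of B 1] by simp

lemma nonneg_matpoly_mult:
  assumes "P \<in> nonneg_matpoly B" "Q \<in> nonneg_matpoly B"
  shows "P ** Q \<in> nonneg_matpoly B"
proof -
  have "matpow B i ** Q \<in> nonneg_matpoly B" for i
    using assms(2)
  proof induction
    case (matpow j) then show ?case by (metis matpow_add nonneg_matpoly.matpow)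
  qed (auto simp: matrix_add_ldistrib matrix_scalar_ac scalar_matrix_assoc[symmetric]
      intro: nonneg_matpoly.intros)
  with assms(1) show ?thesis
    by induction (auto simp: matrix_add_rdistrib scalar_matrix_assoc[symmetric]
        intro: nonneg_matpoly.intros)
qed

lemma nonneg_matpoly_commute:
  "P \<in> nonneg_matpoly B \<Longrightarrow> X ** B = B ** X \<Longrightarrow> X ** P = P ** X"
  by (induction rule: nonneg_matpoly.induct)
    (simp_all add: matpow_commute matrix_add_ldistrib matrix_add_rdistrib
      matrix_scalar_ac scalar_matrix_assoc[symmetric])

lemma psd_nonneg_matpoly: "P \<in> nonneg_matpoly B \<Longrightarrow> psd B \<Longrightarrow> psd P"
proof (induction rule: nonneg_matpoly.induct)
  case (matpow i) then show ?case by (rule psd_matpow)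
qed (auto simp: psd_def transpose_add transpose_scalar inner_add_right transpose_def vec_eq_iff
    matrix_vector_mult_add_rdistrib scaleR_matrix_vector_assoc[symmetric])

text \<open>For \<open>0 \<le> B \<le> I\<close> the iterates increase to a solution \<open>Y\<close> of \<open>Y = (B + Y\<^sup>2) / 2\<close>
  with \<open>0 \<le> Y \<le> I\<close>, and then \<open>(I - Y)\<^sup>2 = I - B\<close>.\<close>

primrec sqrt_iter :: "real^'n^'n \<Rightarrow> nat \<Rightarrow> real^'n^'n" where
  "sqrt_iter B 0 = 0"
| "sqrt_iter B (Suc n) = (1/2) *\<^sub>R (B + sqrt_iter B n ** sqrt_iter B n)"

lemma sqrt_iter_nonneg_matpoly: "sqrt_iter B n \<in> nonneg_matpoly B"
  by (induction n) (auto intro!: nonneg_matpoly.intros nonneg_matpoly_mult nonneg_matpoly_self)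

lemma sqrt_iter_increment: "sqrt_iter B (Suc n) - sqrt_iter B n \<in> nonneg_matpoly B"
proof (induction n)
  case 0 show ?case by (auto intro!: nonneg_matpoly.intros nonneg_matpoly_self)
next
  case (Suc n)
  let ?Y1 = "sqrt_iter B (Suc n)" and ?Y0 = "sqrt_iter B n"
  have "?Y1 ** B = B ** ?Y1"
    using nonneg_matpoly_commute[OF sqrt_iter_nonneg_matpoly] by metis
  then have "?Y0 ** ?Y1 = ?Y1 ** ?Y0"
    using nonneg_matpoly_commute[OF sqrt_iter_nonneg_matpoly] by metis
  then have "sqrt_iter B (Suc (Suc n)) - ?Y1 = (1/2) *\<^sub>R ((?Y1 - ?Y0) ** (?Y1 + ?Y0))"
    by (simp add: matrix_diff_rdistrib matrix_add_ldistrib algebra_simps)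
  moreover have "(?Y1 - ?Y0) ** (?Y1 + ?Y0) \<in> nonneg_matpoly B"
    by (intro nonneg_matpoly_mult Suc.IH nonneg_matpoly.add sqrt_iter_nonneg_matpoly)
  ultimately show ?case by (simp add: nonneg_matpoly.scaleR)
qed

lemma inner_axis_matrix_axis: "axis i 1 \<bullet> (M *v axis j 1) = (M::real^'n^'m) $ i $ j"
  by (simp add: inner_axis' matrix_vector_mult_basis column_def)

lemma tendsto_matrix_form:
  assumes "\<And>i j. (\<lambda>n. M n $ i $ j) \<longlonglongrightarrow> (L::real^'n^'m) $ i $ j"
  shows "(\<lambda>n. x \<bullet> (M n *v y)) \<longlonglongrightarrow> x \<bullet> (L *v y)"
  unfolding inner_vec_def matrix_vector_mult_def by (auto intro!: tendsto_intros assms)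

lemma tendsto_matrix_mult_entry:
  assumes "\<And>i j. (\<lambda>n. M n $ i $ j) \<longlonglongrightarrow> (L::real^'n^'m) $ i $ j"
    and "\<And>i j. (\<lambda>n. N n $ i $ j) \<longlonglongrightarrow> (K::real^'p^'n) $ i $ j"
  shows "(\<lambda>n. (M n ** N n) $ i $ j) \<longlonglongrightarrow> (L ** K) $ i $ j"
  unfolding matrix_matrix_mult_def by (auto intro!: tendsto_intros assms)

definition sqrt_lim :: "real^'n^'n \<Rightarrow> real^'n^'n" where
  "sqrt_lim B = (\<chi> i j. lim (\<lambda>n. sqrt_iter B n $ i $ j))"

context
  fixes B :: "real^'n^'n"
  assumes psd_B: "psd B" and B_le: "\<And>x. x \<bullet> (B *v x) \<le> x \<bullet> x"
begin

lemma psd_sqrt_iter: "psd (sqrt_iter B n)"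
  using psd_nonneg_matpoly[OF sqrt_iter_nonneg_matpoly psd_B] .

lemma sqrt_iter_form_le: "x \<bullet> (sqrt_iter B n *v x) \<le> x \<bullet> x"
proof (induction n arbitrary: x)
  case (Suc n)
  let ?Y = "sqrt_iter B n"
  have "x \<bullet> (sqrt_iter B (Suc n) *v x) = (x \<bullet> (B *v x) + (?Y *v x) \<bullet> (?Y *v x)) / 2"
    using psd_sqrt_iter[of n] inner_symmetric_matrix[of ?Y x "?Y *v x"]
    by (simp add: psd_def algebra_simps matrix_vector_mul_assoc[symmetric]
        scaleR_matrix_vector_assoc[symmetric] inner_add_right)
  also have "\<dots> \<le> x \<bullet> x"
    using B_le[of x] psd_contraction[OF psd_sqrt_iter Suc.IH, of x] by simp
  finally show ?case .
qed simp

lemma sqrt_iter_form_mono: "x \<bullet> (sqrt_iter B n *v x) \<le> x \<bullet> (sqrt_iter B (Suc n) *v x)"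
  using psd_nonneg_matpoly[OF sqrt_iter_increment psd_B, of n]
  by (simp add: psd_def matrix_vector_mult_diff_rdistrib inner_diff_right)

lemma convergent_sqrt_iter_form: "convergent (\<lambda>n. x \<bullet> (sqrt_iter B n *v x))"
  using incseq_SucI[of "\<lambda>n. x \<bullet> (sqrt_iter B n *v x)", OF sqrt_iter_form_mono]
    sqrt_iter_form_le incseq_convergent
  by (metis convergent_def)

lemma sqrt_iter_tendsto: "(\<lambda>n. sqrt_iter B n $ i $ j) \<longlonglongrightarrow> sqrt_lim B $ i $ j"
proof -
  let ?a = "axis i 1 :: real^'n" and ?b = "axis j 1 :: real^'n"
  let ?q = "\<lambda>x n. x \<bullet> (sqrt_iter B n *v x)"
  have polarization: "sqrt_iter B n $ i $ j = (?q (?a + ?b) n - ?q ?a n - ?q ?b n) / 2" for n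
  proof -
    have "?b \<bullet> (sqrt_iter B n *v ?a) = ?a \<bullet> (sqrt_iter B n *v ?b)"
      using inner_symmetric_matrix[of "sqrt_iter B n" ?b ?a] psd_sqrt_iter[of n]
      by (simp add: psd_def inner_commute)
    then show ?thesis
      by (simp add: matrix_vector_right_distrib inner_add_left inner_add_right
          inner_axis_matrix_axis)
  qed
  have "(\<lambda>n. ?q x n) \<longlonglongrightarrow> lim (?q x)" for x
    using convergent_sqrt_iter_form convergent_LIMSEQ_iff by blast
  then have "(\<lambda>n. (?q (?a + ?b) n - ?q ?a n - ?q ?b n) / 2)
      \<longlonglongrightarrow> (lim (?q (?a + ?b)) - lim (?q ?a) - lim (?q ?b)) / 2"
    by (intro tendsto_intros) auto
  then have "convergent (\<lambda>n. sqrt_iter B n $ i $ j)"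
    unfolding polarization convergent_def by blast
  then show ?thesis by (simp add: sqrt_lim_def convergent_LIMSEQ_iff)
qed

lemma sqrt_lim_fixpoint: "sqrt_lim B = (1/2) *\<^sub>R (B + sqrt_lim B ** sqrt_lim B)"
proof -
  have "(\<lambda>n. (1/2) * (B $ i $ j + (sqrt_iter B n ** sqrt_iter B n) $ i $ j))
      \<longlonglongrightarrow> (1/2) * (B $ i $ j + (sqrt_lim B ** sqrt_lim B) $ i $ j)" for i j
    by (intro tendsto_intros tendsto_matrix_mult_entry sqrt_iter_tendsto)
  then have "(\<lambda>n. sqrt_iter B (Suc n) $ i $ j)
      \<longlonglongrightarrow> ((1/2) *\<^sub>R (B + sqrt_lim B ** sqrt_lim B)) $ i $ j" for i j
    by simp
  then have "sqrt_lim B $ i $ j = ((1/2) *\<^sub>R (B + sqrt_lim B ** sqrt_lim B)) $ i $ j" for i j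
    by (rule LIMSEQ_unique[OF LIMSEQ_Suc[OF sqrt_iter_tendsto]])
  then show ?thesis by (simp only: vec_eq_iff) blast
qed

lemma sqrt_lim_symmetric: "transpose (sqrt_lim B) = sqrt_lim B"
proof -
  have "(\<lambda>n. sqrt_iter B n $ i $ j) \<longlonglongrightarrow> sqrt_lim B $ j $ i" for i j
    using sqrt_iter_tendsto[of j i] psd_sqrt_iter
    by (simp add: psd_def transpose_def vec_eq_iff)
  then have "sqrt_lim B $ j $ i = sqrt_lim B $ i $ j" for i j
    using LIMSEQ_unique[OF sqrt_iter_tendsto] by blast
  then show ?thesis by (simp add: transpose_def vec_eq_iff)
qed

lemma sqrt_lim_form_le: "x \<bullet> (sqrt_lim B *v x) \<le> x \<bullet> x"
  using tendsto_matrix_form[OF sqrt_iter_tendsto, of x x] sqrt_iter_form_le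
  by (intro LIMSEQ_le_const2) auto

lemma sqrt_lim_commute:
  assumes "X ** B = B ** X"
  shows "X ** sqrt_lim B = sqrt_lim B ** X"
proof -
  have "X ** sqrt_iter B n = sqrt_iter B n ** X" for n
    using nonneg_matpoly_commute[OF sqrt_iter_nonneg_matpoly assms] .
  then have "(\<lambda>n. (X ** sqrt_iter B n) $ i $ j) \<longlonglongrightarrow> (sqrt_lim B ** X) $ i $ j" for i j
    by (simp only:) (intro tendsto_matrix_mult_entry sqrt_iter_tendsto tendsto_const)
  moreover have "(\<lambda>n. (X ** sqrt_iter B n) $ i $ j) \<longlonglongrightarrow> (X ** sqrt_lim B) $ i $ j" for i j
    by (intro tendsto_matrix_mult_entry sqrt_iter_tendsto tendsto_const)
  ultimately have "(X ** sqrt_lim B) $ i $ j = (sqrt_lim B ** X) $ i $ j" for i j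
    using LIMSEQ_unique by blast
  then show ?thesis by (simp only: vec_eq_iff) blast
qed

lemma psd_id_minus_sqrt_lim: "psd (mat 1 - sqrt_lim B)"
  by (simp add: psd_def transpose_diff sqrt_lim_symmetric matrix_vector_mult_diff_rdistrib
      inner_diff_right sqrt_lim_form_le)

lemma id_minus_sqrt_lim_squared: "(mat 1 - sqrt_lim B) ** (mat 1 - sqrt_lim B) = mat 1 - B"
proof -
  have "sqrt_lim B ** sqrt_lim B = 2 *\<^sub>R sqrt_lim B - B"
    using arg_cong[OF sqrt_lim_fixpoint, of "\<lambda>M. 2 *\<^sub>R M"] by (simp add: algebra_simps)
  then show ?thesis by (simp add: matrix_diff_rdistrib matrix_diff_ldistrib scaleR_2)
qed

end

lemma quadratic_form_le_sum_abs:
  fixes S :: "real^'n^'n"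
  shows "x \<bullet> (S *v x) \<le> (\<Sum>i\<in>UNIV. \<Sum>j\<in>UNIV. \<bar>S $ i $ j\<bar>) * (x \<bullet> x)"
proof -
  have "x \<bullet> (S *v x) = (\<Sum>i\<in>UNIV. \<Sum>j\<in>UNIV. x $ i * (S $ i $ j * x $ j))"
    by (simp add: inner_vec_def matrix_vector_mult_def sum_distrib_left)
  also have "\<dots> \<le> (\<Sum>i\<in>UNIV. \<Sum>j\<in>UNIV. \<bar>S $ i $ j\<bar> * (x \<bullet> x))"
  proof (intro sum_mono)
    fix i j
    have "x $ i * (S $ i $ j * x $ j) \<le> \<bar>x $ i * (S $ i $ j * x $ j)\<bar>" by simp
    also have "\<dots> = \<bar>S $ i $ j\<bar> * (\<bar>x $ i\<bar> * \<bar>x $ j\<bar>)" by (simp add: abs_mult)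
    also have "\<dots> \<le> \<bar>S $ i $ j\<bar> * (norm x * norm x)"
      by (intro mult_left_mono mult_mono component_le_norm_cart) auto
    finally show "x $ i * (S $ i $ j * x $ j) \<le> \<bar>S $ i $ j\<bar> * (x \<bullet> x)"
      by (simp add: power2_norm_eq_inner[symmetric] power2_eq_square)
  qed
  also have "\<dots> = (\<Sum>i\<in>UNIV. \<Sum>j\<in>UNIV. \<bar>S $ i $ j\<bar>) * (x \<bullet> x)"
    by (simp add: sum_distrib_right)
  finally show ?thesis .
qed

lemma psd_sqrt_exists:
  fixes S :: "real^'n^'n"
  assumes "psd S"
  obtains R where "psd R" "R ** R = S" "\<And>X. X ** S = S ** X \<Longrightarrow> X ** R = R ** X"
proof -
  define c where "c = 1 + (\<Sum>i\<in>UNIV. \<Sum>j\<in>UNIV. \<bar>S $ i $ j\<bar>)"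
  have "0 < c" unfolding c_def by (smt (verit) sum_nonneg abs_ge_zero)
  define B where "B = mat 1 - (1/c) *\<^sub>R S"
  have B_form: "x \<bullet> (B *v x) = x \<bullet> x - (x \<bullet> (S *v x)) / c" for x
    by (simp add: B_def matrix_vector_mult_diff_rdistrib inner_diff_right
        scaleR_matrix_vector_assoc[symmetric])
  have "x \<bullet> (S *v x) \<le> c * (x \<bullet> x)" for x
  proof -
    have "x \<bullet> (S *v x) \<le> (c - 1) * (x \<bullet> x)"
      using quadratic_form_le_sum_abs[of x S] by (simp add: c_def)
    also have "\<dots> \<le> c * (x \<bullet> x)" by (simp add: algebra_simps)
    finally show ?thesis .
  qed
  then have psd_B: "psd B"
    using assms \<open>0 < c\<close>
    by (simp add: psd_def B_def transpose_diff transpose_scalar B_form[unfolded B_def]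
        divide_le_eq mult.commute)
  have B_le: "x \<bullet> (B *v x) \<le> x \<bullet> x" for x
    using assms \<open>0 < c\<close> by (simp add: B_form psd_def)
  define R where "R = sqrt c *\<^sub>R (mat 1 - sqrt_lim B)"
  show ?thesis
  proof
    show "psd R"
      using psd_id_minus_sqrt_lim[OF psd_B B_le] \<open>0 < c\<close>
      by (auto simp: psd_def R_def transpose_scalar scaleR_matrix_vector_assoc[symmetric])
    show "R ** R = S"
      using \<open>0 < c\<close> id_minus_sqrt_lim_squared[OF psd_B B_le]
      by (simp add: R_def matrix_scalar_ac scalar_matrix_assoc[symmetric] B_def)
    fix X assume "X ** S = S ** X"
    then have "X ** B = B ** X"
      by (simp add: B_def matrix_diff_ldistrib matrix_diff_rdistrib matrix_scalar_ac
          scalar_matrix_assoc[symmetric])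
    then show "X ** R = R ** X"
      using sqrt_lim_commute[OF psd_B B_le]
      by (simp add: R_def matrix_diff_ldistrib matrix_diff_rdistrib matrix_scalar_ac
          scalar_matrix_assoc[symmetric] scaleR_diff_right)
  qed
qed

lemma psd_sqrt_unique:
  fixes R P :: "real^'n^'n"
  assumes R: "psd R" "R ** R = S" and P: "psd P" "P ** P = S"
    and commute: "\<And>X. X ** S = S ** X \<Longrightarrow> X ** R = R ** X"
  shows "P = R"
proof -
  have "P ** R = R ** P"
    using commute P(2) by (metis matrix_mul_assoc)
  then have zero: "(R + P) ** (R - P) = 0"
    using R(2) P(2) by (simp add: matrix_diff_ldistrib matrix_add_rdistrib)
  have "(R - P) *v x = 0" for x
  proof -
    let ?y = "(R - P) *v x"
    have "?y \<bullet> ((R + P) *v ?y) = ?y \<bullet> (((R + P) ** (R - P)) *v x)"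
      by (simp add: matrix_vector_mul_assoc)
    then have "?y \<bullet> (R *v ?y) + ?y \<bullet> (P *v ?y) = 0"
      by (simp add: zero matrix_vector_mult_add_rdistrib inner_add_right)
    then have "?y \<bullet> (R *v ?y) = 0" "?y \<bullet> (P *v ?y) = 0"
      using R(1) P(1) unfolding psd_def by (smt (verit))+
    then have "R *v ?y = 0" "P *v ?y = 0"
      using psd_mult_eq_0_of_form_eq_0 R(1) P(1) by auto
    then have "(R - P) *v ?y = 0" by (simp add: matrix_vector_mult_diff_rdistrib)
    moreover have "?y \<bullet> ?y = x \<bullet> ((R - P) *v ?y)"
      using R(1) P(1) inner_symmetric_matrix[of "R - P" x ?y]
      by (simp add: psd_def transpose_diff)
    ultimately show ?thesis by simp
  qed
  then have "R - P = 0" by (simp add: matrix_eq)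
  then show ?thesis by simp
qed

lemma
  fixes S :: "real^'n^'n"
  assumes "psd S"
  shows psd_msqrt: "psd (msqrt S)" and msqrt_squared: "msqrt S ** msqrt S = S"
proof -
  obtain R where "psd R" "R ** R = S" "\<And>X. X ** S = S ** X \<Longrightarrow> X ** R = R ** X"
    using psd_sqrt_exists[OF assms] by blast
  then have "\<exists>!R. psd R \<and> R ** R = S"
    using psd_sqrt_unique[of R S] by blast
  then have "psd (msqrt S) \<and> msqrt S ** msqrt S = S"
    unfolding msqrt_def by (rule theI')
  then show "psd (msqrt S)" "msqrt S ** msqrt S = S" by auto
qed

lemma sum_UNIV_Plus:
  fixes f :: "'a::finite + 'b::finite \<Rightarrow> 'c::comm_monoid_add"
  shows "(\<Sum>c\<in>UNIV. f c) = (\<Sum>a\<in>UNIV. f (Inl a)) + (\<Sum>b\<in>UNIV. f (Inr b))"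
proof -
  have "(\<Sum>c\<in>UNIV <+> UNIV. f c) = (\<Sum>a\<in>UNIV. f (Inl a)) + (\<Sum>b\<in>UNIV. f (Inr b))"
    by (subst sum.Plus) (auto simp: comp_def)
  then show ?thesis by simp
qed

lemma inner_blockdiag:
  fixes S :: "real^'m^'m" and W :: "real^'n^'n" and g :: "real^('m + 'n)"
  defines "g\<^sub>1 \<equiv> \<chi> a. g $ Inl a" and "g\<^sub>2 \<equiv> \<chi> b. g $ Inr b"
  shows "g \<bullet> (blockdiag S W *v g) = g\<^sub>1 \<bullet> (S *v g\<^sub>1) + g\<^sub>2 \<bullet> (W *v g\<^sub>2)"
  by (simp add: g\<^sub>1_def g\<^sub>2_def inner_vec_def matrix_vector_mult_def blockdiag_def sum_UNIV_Plus)

lemma psd_blockdiag: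
  assumes "psd S" "psd W"
  shows "psd (blockdiag S W)"
proof -
  have "transpose (blockdiag S W) = blockdiag (transpose S) (transpose W)"
    by (simp add: vec_eq_iff transpose_def blockdiag_def split: sum.split)
  then show ?thesis
    using assms by (simp add: psd_def inner_blockdiag)
qed

lemma norm_BI_msqrt_blockdiag:
  fixes B :: "real^'m^'n" and h :: "real^'n"
  assumes "psd S" "psd W"
  shows "(norm (h v* (BI B ** msqrt (blockdiag S W))))\<^sup>2
    = (h v* B) \<bullet> (S *v (h v* B)) + h \<bullet> (W *v h)"
proof -
  let ?R = "msqrt (blockdiag S W)" and ?g = "h v* BI B"
  have R: "transpose ?R = ?R" "?R ** ?R = blockdiag S W"
    using psd_msqrt msqrt_squared psd_blockdiag[OF assms] by (auto simp: psd_def)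
  have "h v* (BI B ** ?R) = ?R *v ?g"
    by (metis R(1) transpose_matrix_vector vector_matrix_mul_assoc)
  then have "(norm (h v* (BI B ** ?R)))\<^sup>2 = ?g \<bullet> (?R *v (?R *v ?g))"
    using inner_symmetric_matrix[OF R(1), of ?g "?R *v ?g"]
    by (simp add: power2_norm_eq_inner)
  also have "\<dots> = ?g \<bullet> (blockdiag S W *v ?g)" by (simp add: matrix_vector_mul_assoc R(2))
  also have "\<dots> = (h v* B) \<bullet> (S *v (h v* B)) + h \<bullet> (W *v h)"
    by (simp add: inner_blockdiag vector_matrix_mult_def BI_def if_distrib cong: if_cong)
  finally show ?thesis .
qed

section \<open>The standard normal distribution\<close>

abbreviation std_normal :: "real measure" where
  "std_normal \<equiv> density lborel std_normal_density"

interpretation std_normal: real_distribution std_normal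
  using prob_space_normal_density by (simp add: real_distribution_def real_distribution_axioms_def)

lemma Phi_eq_cdf: "Phi = cdf std_normal"
  by (simp add: fun_eq_iff Phi_def cdf_def)

lemma Phi_mono: "x \<le> y \<Longrightarrow> Phi x \<le> Phi y"
  unfolding Phi_eq_cdf by (rule std_normal.cdf_nondecreasing)

lemma std_normal_singleton: "measure std_normal {x} = 0"
proof -
  have "AE y in lborel. y \<in> {x} \<longrightarrow> ennreal (std_normal_density y) = 0"
    using AE_lborel_singleton[of x] by eventually_elim auto
  then have "{x} \<in> null_sets std_normal"
    by (subst null_sets_density_iff) auto
  then show ?thesis by (simp add: measure_def null_setsD1)
qed

lemma isCont_Phi: "isCont Phi x"
  unfolding Phi_eq_cdf by (simp add: std_normal.isCont_cdf std_normal_singleton)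

lemma Phi_strict_mono:
  assumes "a < b" shows "Phi a < Phi b"
proof -
  define c where "c = std_normal_density (max \<bar>a\<bar> \<bar>b\<bar>)"
  have "0 < c" unfolding c_def by (rule normal_density_pos) simp
  have c_le: "c \<le> std_normal_density y" if "y \<in> {a<..b}" for y
  proof -
    have "\<bar>y\<bar> \<le> max \<bar>a\<bar> \<bar>b\<bar>" using that by auto
    then have "y\<^sup>2 \<le> (max \<bar>a\<bar> \<bar>b\<bar>)\<^sup>2"
      by (metis abs_ge_zero power2_abs power_mono)
    then show ?thesis
      unfolding c_def std_normal_density_def by (intro mult_left_mono) auto
  qed
  have "ennreal c * ennreal (b - a) = (\<integral>\<^sup>+ y. ennreal c * indicator {a<..b} y \<partial>lborel)"
    using assms by (simp add: nn_integral_cmult_indicator)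
  also have "\<dots> \<le> (\<integral>\<^sup>+ y. ennreal (std_normal_density y) * indicator {a<..b} y \<partial>lborel)"
    by (intro nn_integral_mono) (auto simp: c_le split: split_indicator)
  also have "\<dots> = ennreal (measure std_normal {a<..b})"
    by (simp add: emeasure_density std_normal.emeasure_eq_measure[symmetric])
  finally have "c * (b - a) \<le> measure std_normal {a<..b}"
    using \<open>0 < c\<close> assms by (simp add: ennreal_mult[symmetric])
  moreover have "0 < c * (b - a)" using \<open>0 < c\<close> assms by simp
  ultimately show ?thesis
    unfolding Phi_eq_cdf using std_normal.cdf_diff_eq[OF assms] by simp
qed

lemma Phi_Phi_inv:
  assumes "0 < p" "p < 1"
  shows "Phi (Phi_inv p) = p"
proof -
  obtain a where a: "Phi a < p"
    using order_tendstoD(2)[OF std_normal.cdf_lim_at_bot assms(1)]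
    by (auto simp: eventually_at_bot_linorder Phi_eq_cdf)
  obtain b where b: "p < Phi b"
    using order_tendstoD(1)[OF std_normal.cdf_lim_at_top_prob assms(2)]
    by (auto simp: eventually_at_top_linorder Phi_eq_cdf)
  have "a \<le> b"
  proof (rule ccontr)
    assume "\<not> a \<le> b"
    then have "Phi b \<le> Phi a" by (intro Phi_mono) simp
    with a b show False by simp
  qed
  then obtain x where x: "Phi x = p"
    using IVT[of Phi a p b] a b isCont_Phi by (auto simp: less_imp_le)
  have "y = x" if "Phi y = p" for y
  proof (rule ccontr)
    assume "y \<noteq> x"
    then show False
      using Phi_strict_mono[of y x] Phi_strict_mono[of x y] that x by (auto simp: neq_iff)
  qed
  with x have "\<exists>!x. Phi x = p" by blast
  then show ?thesis unfolding Phi_inv_def by (rule theI')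
qed

lemma Phi_0: "Phi 0 = 1/2"
proof -
  have reflect: "(\<lambda>y. ennreal (std_normal_density (0 + (-1) * y)) * indicator {..0} (0 + (-1) * y))
      = (\<lambda>y. ennreal (std_normal_density y) * indicator {0..} (y::real))"
    by (auto simp: fun_eq_iff std_normal_density_def split: split_indicator)
  have "emeasure std_normal {..0} = (\<integral>\<^sup>+ y. ennreal (std_normal_density y) * indicator {..0} y \<partial>lborel)"
    by (simp add: emeasure_density)
  also have "\<dots> = ennreal \<bar>-1\<bar> * (\<integral>\<^sup>+ y. ennreal (std_normal_density (0 + (-1) * y))
      * indicator {..0} (0 + (-1) * y) \<partial>lborel)"
    by (rule nn_integral_real_affine) auto
  also have "\<dots> = emeasure std_normal {0..}"
    unfolding reflect by (simp add: emeasure_density)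
  finally have "measure std_normal {..0} = measure std_normal {0..}"
    by (simp add: std_normal.emeasure_eq_measure)
  also have "\<dots> = measure std_normal {0<..}"
  proof -
    have "{0::real..} = {0} \<union> {0<..}" by auto
    then show ?thesis
      using std_normal.finite_measure_Union[of "{0}" "{0<..}"] std_normal_singleton by simp
  qed
  also have "\<dots> = 1 - measure std_normal {..0}"
    using std_normal.prob_compl[of "{..0}"] by (simp add: Compl_eq_Diff_UNIV[symmetric])
  finally show ?thesis by (simp add: Phi_def)
qed

lemma Phi_inv_pos:
  assumes "1/2 < p" "p < 1"
  shows "0 < Phi_inv p"
proof (rule ccontr)
  assume "\<not> 0 < Phi_inv p"
  then have "Phi (Phi_inv p) \<le> Phi 0" by (intro Phi_mono) simp
  then show False using Phi_Phi_inv[of p] assms Phi_0 by simp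
qed

lemma gauss_cdf_ge_of_sqrt_le:
  assumes p: "1/2 < p" "p < 1" and "0 \<le> v" and sd: "sqrt v \<le> (t - m) / Phi_inv p"
  shows "p \<le> gauss_cdf m v t"
proof (cases "v = 0")
  case True
  then have "m \<le> t"
    using sd Phi_inv_pos[OF p] by (simp add: zero_le_divide_iff)
  then show ?thesis using True p by (simp add: gauss_cdf_def)
next
  case False
  then have "Phi_inv p * sqrt v \<le> t - m"
    using sd Phi_inv_pos[OF p] by (simp add: le_divide_eq mult.commute)
  then have "Phi_inv p \<le> (t - m) / sqrt v"
    using False \<open>0 \<le> v\<close> by (simp add: le_divide_eq)
  then have "p \<le> Phi ((t - m) / sqrt v)"
    using Phi_mono[of "Phi_inv p"] Phi_Phi_inv p by fastforce
  then show ?thesis using False by (simp add: gauss_cdf_def)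
qed

lemma gauss_cdf_approx_from_below:
  assumes "0 \<le> v" "y < gauss_cdf m v t"
  shows "\<exists>r \<in> insert m \<rat>. r \<le> t \<and> y < gauss_cdf m v r"
proof (cases "v = 0")
  case True
  show ?thesis
  proof (cases "m \<le> t")
    case True
    then show ?thesis using \<open>v = 0\<close> assms by (auto simp: gauss_cdf_def)
  next
    case False
    obtain r where "r \<in> \<rat>" "r < t" using Rats_dense_in_real[of "t - 1" t] by auto
    then show ?thesis
      using False \<open>v = 0\<close> assms by (intro bexI[of _ r]) (auto simp: gauss_cdf_def)
  qed
next
  case False
  define g where "g r = Phi ((r - m) / sqrt v)" for r
  have "isCont g t"
    unfolding g_def by (intro continuous_intros isCont_o2[OF _ isCont_Phi]) (use False in auto)
  moreover have "y < g t" using assms False by (simp add: g_def gauss_cdf_def)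
  ultimately have "\<forall>\<^sub>F r in at t. y < g r"
    by (intro order_tendstoD(1)) (simp_all add: isCont_def)
  then obtain d where "0 < d" and d: "\<And>r. r \<noteq> t \<Longrightarrow> dist r t < d \<Longrightarrow> y < g r"
    by (auto simp: eventually_at)
  obtain r where "r \<in> \<rat>" "t - d < r" "r < t"
    using Rats_dense_in_real[of "t - d" t] \<open>0 < d\<close> by auto
  then show ?thesis
    using d[of r] False by (auto simp: dist_real_def g_def gauss_cdf_def)
qed

section \<open>Conditional probabilities\<close>

lemma cprob_set_integral:
  assumes "prob_space M" and "sigma_finite_subalgebra M F"
    and C: "C \<in> sets F" and P: "{\<omega>\<in>space M. P \<omega>} \<in> sets M"
  shows "measure M (C \<inter> {\<omega>\<in>space M. P \<omega>}) = (\<integral>\<omega>\<in>C. cprob M F P \<omega> \<partial>M)"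
proof -
  interpret prob_space M by fact
  interpret sigma_finite_subalgebra M F by fact
  let ?E = "{\<omega>\<in>space M. P \<omega>}"
  have "C \<in> sets M" using C subalg by (meson subalgebra_def subsetD)
  have "measure M (C \<inter> ?E) = (\<integral>\<omega>\<in>C. indicator ?E \<omega> \<partial>M)"
    using \<open>C \<in> sets M\<close> P unfolding set_lebesgue_integral_def
    by (simp add: indicator_inter_arith[symmetric] Int_commute)
  also have "\<dots> = (\<integral>\<omega>\<in>C. cprob M F P \<omega> \<partial>M)"
    unfolding cprob_def using P C by (intro real_cond_exp_intA) (auto simp: emeasure_eq_measure)
  finally show ?thesis .
qed

lemma measure_Int_ge_of_cprob_ge:
  assumes "prob_space M" and "sigma_finite_subalgebra M F"
    and C: "C \<in> sets F" and P: "{\<omega>\<in>space M. P \<omega>} \<in> sets M"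
    and ge: "AE \<omega> in M. \<omega> \<in> C \<longrightarrow> c \<le> cprob M F P \<omega>"
  shows "c * measure M C \<le> measure M (C \<inter> {\<omega>\<in>space M. P \<omega>})"
proof -
  interpret prob_space M by fact
  interpret sigma_finite_subalgebra M F by fact
  have "C \<in> sets M" using C subalg by (meson subalgebra_def subsetD)
  have "c * measure M C = (\<integral>\<omega>\<in>C. c \<partial>M)"
    using \<open>C \<in> sets M\<close> by (simp add: set_integral_const emeasure_eq_measure)
  also have "\<dots> \<le> (\<integral>\<omega>\<in>C. cprob M F P \<omega> \<partial>M)"
  proof (rule set_integral_mono_AE)
    show "set_integrable M C (\<lambda>_. c)"
      using \<open>C \<in> sets M\<close> by (simp add: set_integrable_def emeasure_eq_measure)
    show "set_integrable M C (cprob M F P)"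
      unfolding set_integrable_def cprob_def using \<open>C \<in> sets M\<close> P
      by (intro integrable_mult_indicator real_cond_exp_int(1)) (auto simp: emeasure_eq_measure)
  qed (use ge in simp)
  also have "\<dots> = measure M (C \<inter> {\<omega>\<in>space M. P \<omega>})"
    using cprob_set_integral[OF assms(1-4)] by simp
  finally show ?thesis .
qed

lemma cprob_mono_on:
  assumes "prob_space M" and "sigma_finite_subalgebra M F"
    and D: "D \<in> sets F"
    and P: "{\<omega>\<in>space M. P \<omega>} \<in> sets M" and Q: "{\<omega>\<in>space M. Q \<omega>} \<in> sets M"
    and imp: "\<And>\<omega>. \<omega> \<in> D \<Longrightarrow> P \<omega> \<Longrightarrow> Q \<omega>"
  shows "AE \<omega> in M. \<omega> \<in> D \<longrightarrow> cprob M F P \<omega> \<le> cprob M F Q \<omega>"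
proof -
  interpret prob_space M by fact
  interpret sigma_finite_subalgebra M F by fact
  have "D \<in> sets M" using D subalg by (meson subalgebra_def subsetD)
  have int: "integrable M (\<lambda>\<omega>. indicator D \<omega> * indicator {\<omega>\<in>space M. R \<omega>} \<omega> :: real)"
    if "{\<omega>\<in>space M. R \<omega>} \<in> sets M" for R
    by (rule integrable_const_bound[where B=1])
      (use \<open>D \<in> sets M\<close> that in \<open>auto split: split_indicator\<close>)
  have pull_out: "AE \<omega> in M. real_cond_exp M F (\<lambda>\<omega>. indicator D \<omega> * indicator {\<omega>\<in>space M. R \<omega>} \<omega>) \<omega>
      = indicator D \<omega> * cprob M F R \<omega>"
    if "{\<omega>\<in>space M. R \<omega>} \<in> sets M" for R
    unfolding cprob_def using D that by (intro real_cond_exp_mult int) auto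
  have "AE \<omega> in M. real_cond_exp M F (\<lambda>\<omega>. indicator D \<omega> * indicator {\<omega>\<in>space M. P \<omega>} \<omega>) \<omega>
      \<le> real_cond_exp M F (\<lambda>\<omega>. indicator D \<omega> * indicator {\<omega>\<in>space M. Q \<omega>} \<omega>) \<omega>"
    by (rule real_cond_exp_mono[OF _ int[OF P] int[OF Q]])
      (auto intro!: AE_I2 dest: imp split: split_indicator)
  with pull_out[OF P] pull_out[OF Q] show ?thesis
    by eventually_elim (auto simp: cprob_def)
qed

text \<open>Only countably many thresholds can be handled simultaneously almost everywhere; monotonicity
  in the threshold and \<open>gauss_cdf_approx_from_below\<close> reduce the random threshold \<open>t \<omega>\<close> to the
  countable set \<open>insert m \<rat>\<close>.\<close>

lemma cprob_le_random_threshold_ge: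
  fixes Z t v :: "'a \<Rightarrow> real"
  assumes "prob_space M" and "sigma_finite_subalgebra M F"
    and Z: "Z \<in> borel_measurable M" and t: "t \<in> borel_measurable F"
    and cdf: "\<And>r. AE \<omega> in M. cprob M F (\<lambda>\<omega>'. Z \<omega>' \<le> r) \<omega> = gauss_cdf m (v \<omega>) r"
    and D: "\<And>\<omega>. \<omega> \<in> D \<Longrightarrow> 0 \<le> v \<omega> \<and> c \<le> gauss_cdf m (v \<omega>) (t \<omega>)"
  shows "AE \<omega> in M. \<omega> \<in> D \<longrightarrow> c \<le> cprob M F (\<lambda>\<omega>'. Z \<omega>' \<le> t \<omega>') \<omega>"
proof -
  interpret sigma_finite_subalgebra M F by fact
  have "space F = space M" using subalg by (simp add: subalgebra_def)
  have "t \<in> borel_measurable M" using measurable_from_subalg[OF subalg t] .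
  have countable: "countable (insert m \<rat>)" by (simp add: countable_rat)
  have "AE \<omega> in M. \<forall>r\<in>insert m \<rat>. cprob M F (\<lambda>\<omega>'. Z \<omega>' \<le> r) \<omega> = gauss_cdf m (v \<omega>) r"
    using cdf by (subst AE_ball_countable[OF countable]) auto
  moreover have "AE \<omega> in M. \<forall>r\<in>insert m \<rat>. \<omega> \<in> {\<omega>\<in>space M. r \<le> t \<omega>} \<longrightarrow>
      cprob M F (\<lambda>\<omega>'. Z \<omega>' \<le> r) \<omega> \<le> cprob M F (\<lambda>\<omega>'. Z \<omega>' \<le> t \<omega>') \<omega>"
  proof (subst AE_ball_countable[OF countable], intro ballI)
    fix r
    have "{\<omega>\<in>space F. r \<le> t \<omega>} \<in> sets F" using t by measurable
    then show "AE \<omega> in M. \<omega> \<in> {\<omega>\<in>space M. r \<le> t \<omega>} \<longrightarrow>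
        cprob M F (\<lambda>\<omega>'. Z \<omega>' \<le> r) \<omega> \<le> cprob M F (\<lambda>\<omega>'. Z \<omega>' \<le> t \<omega>') \<omega>"
      using Z \<open>t \<in> borel_measurable M\<close> \<open>space F = space M\<close>
      by (intro cprob_mono_on[OF assms(1,2)]) auto
  qed
  ultimately show ?thesis
    using AE_space
  proof eventually_elim
    case (elim \<omega>)
    show ?case
    proof (intro impI, rule ccontr)
      let ?cp = "cprob M F (\<lambda>\<omega>'. Z \<omega>' \<le> t \<omega>') \<omega>"
      assume "\<omega> \<in> D" and "\<not> c \<le> ?cp"
      then have "0 \<le> v \<omega>" "?cp < gauss_cdf m (v \<omega>) (t \<omega>)"
        using D[of \<omega>] by auto
      then obtain r where r: "r \<in> insert m \<rat>" "r \<le> t \<omega>" "?cp < gauss_cdf m (v \<omega>) r"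
        using gauss_cdf_approx_from_below by blast
      have "cprob M F (\<lambda>\<omega>'. Z \<omega>' \<le> r) \<omega> = gauss_cdf m (v \<omega>) r"
        using elim(1) r(1) by blast
      moreover have "cprob M F (\<lambda>\<omega>'. Z \<omega>' \<le> r) \<omega> \<le> ?cp"
        using elim(2,3) r(1,2) by blast
      ultimately show False using r(3) by simp
    qed
  qed
qed

lemma (in finite_measure) measure_Int_INT_ge:
  fixes p :: real
  assumes "finite I" and C: "C \<in> sets M" and G: "\<And>j. j \<in> I \<Longrightarrow> G j \<in> sets M"
    and ge: "\<And>j. j \<in> I \<Longrightarrow> p * measure M C \<le> measure M (C \<inter> G j)"
  shows "(1 - card I * (1 - p)) * measure M C \<le> measure M (C \<inter> (\<Inter>j\<in>I. G j))"
proof -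
  have CG: "C \<inter> (\<Inter>j\<in>I. G j) \<in> sets M"
  proof (cases "I = {}")
    case False
    then show ?thesis using C G \<open>finite I\<close> by (intro sets.Int sets.finite_INT) auto
  qed (use C in simp)
  have "C - C \<inter> (\<Inter>j\<in>I. G j) = (\<Union>j\<in>I. C - G j)" by auto
  then have "measure M C - measure M (C \<inter> (\<Inter>j\<in>I. G j)) = measure M (\<Union>j\<in>I. C - G j)"
    using finite_measure_Diff[OF C CG] by simp
  also have "\<dots> \<le> (\<Sum>j\<in>I. measure M (C - G j))"
    using C G \<open>finite I\<close> by (intro finite_measure_subadditive_finite) auto
  also have "\<dots> \<le> (\<Sum>j\<in>I. (1 - p) * measure M C)"
    using C G ge by (intro sum_mono) (auto simp: finite_measure_Diff' algebra_simps)
  finally show ?thesis by (simp add: algebra_simps)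
qed

lemma (in finite_measure) measure_Int_ge_of_partition:
  fixes p :: real
  assumes E: "E \<in> sets M" "C - E \<in> sets M" "E \<subseteq> C" and X: "X \<in> sets M"
    and "p * measure M E \<le> measure M (E \<inter> X)" "p * measure M (C - E) \<le> measure M ((C - E) \<inter> X)"
  shows "p * measure M C \<le> measure M (C \<inter> X)"
proof -
  have "measure M (E \<union> (C - E)) = measure M E + measure M (C - E)"
    using E by (intro finite_measure_Union) auto
  moreover have "measure M ((E \<inter> X) \<union> ((C - E) \<inter> X)) = measure M (E \<inter> X) + measure M ((C - E) \<inter> X)"
    using E X by (intro finite_measure_Union) auto
  moreover have "E \<union> (C - E) = C" "(E \<inter> X) \<union> ((C - E) \<inter> X) = C \<inter> X" using E by auto
  ultimately show ?thesis using assms by (simp add: distrib_left)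
qed

lemma (in prob_space) prob_ge_of_disjoint_cover:
  assumes "finite I" "disjoint_family_on E I" "\<And>i. i \<in> I \<Longrightarrow> E i \<in> events" "X \<in> events"
    and cover: "AE \<omega> in M. \<omega> \<in> (\<Union>i\<in>I. E i)"
    and ge: "\<And>i. i \<in> I \<Longrightarrow> c * prob (E i) \<le> prob (E i \<inter> X)"
  shows "c \<le> prob X"
proof -
  have "prob (\<Union>i\<in>I. E i) = 1"
    using cover assms(1,3) by (subst AE_in_set_eq_1[symmetric]) (auto intro!: sets.finite_UN)
  then have "(\<Sum>i\<in>I. prob (E i)) = 1"
    using finite_measure_finite_Union[OF assms(1) _ assms(2)] assms(3) by (simp add: image_subset_iff)
  then have "c = (\<Sum>i\<in>I. c * prob (E i))"
    by (metis mult.right_neutral sum_distrib_left)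
  also have "\<dots> \<le> (\<Sum>i\<in>I. prob (E i \<inter> X))"
    using ge by (intro sum_mono) auto
  also have "\<dots> = prob (\<Union>i\<in>I. E i \<inter> X)"
    using assms(1-4)
    by (intro finite_measure_finite_Union[symmetric]) (auto simp: disjoint_family_on_def)
  also have "\<dots> \<le> prob X"
    using assms(3,4) by (intro finite_measure_mono) auto
  finally show ?thesis .
qed

section \<open>Propagation of safety\<close>

text \<open>\<open>S k\<close> is the event of being safe at time \<open>k\<close>; \<open>step\<close> is the measure-theoretic form of
  ``a safe state stays safe for one more step with conditional probability at least \<open>q\<close> given
  \<open>F k\<close>''.\<close>

locale safety_process = prob_space M for M :: "'a measure" +
  fixes F :: "nat \<Rightarrow> 'a measure" and S :: "nat \<Rightarrow> 'a set" and T :: nat and q :: real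
  assumes subalgebra: "\<And>k. sigma_finite_subalgebra M (F k)"
    and filtration: "\<And>k. sets (F k) \<subseteq> sets (F (Suc k))"
    and S_sets: "\<And>k. S k \<in> sets (F k)"
    and q_nonneg: "0 \<le> q"
    and step: "\<And>k C. k \<le> T \<Longrightarrow> C \<in> sets (F k) \<Longrightarrow> C \<subseteq> S k \<Longrightarrow>
      q * measure M C \<le> measure M (C \<inter> S (Suc k))"
begin

lemma sets_F_mono: "i \<le> j \<Longrightarrow> sets (F i) \<subseteq> sets (F j)"
  by (induction rule: dec_induct) (use filtration in blast)+

lemma sets_F_subset: "sets (F k) \<subseteq> sets M"
  using subalgebra[of k] by (simp add: sigma_finite_subalgebra_def subalgebra_def)

lemma S_events: "S k \<in> events"
  using S_sets sets_F_subset by blast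

lemma measure_stay_safe:
  assumes "a + n \<le> Suc T" "C \<in> sets (F a)" "C \<subseteq> S a"
  shows "q ^ n * measure M C \<le> measure M (C \<inter> S (a + n))"
  using assms(1)
proof (induction n)
  case (Suc n)
  have "C \<inter> S (a + n) \<in> sets (F (a + n))"
    using assms(2) sets_F_mono[of a "a + n"] by (intro sets.Int S_sets) auto
  then have "q * measure M (C \<inter> S (a + n)) \<le> measure M (C \<inter> S (a + n) \<inter> S (Suc (a + n)))"
    using Suc.prems by (intro step) auto
  also have "\<dots> \<le> measure M (C \<inter> S (a + Suc n))"
    using assms(2) S_events sets_F_subset by (intro finite_measure_mono) auto
  finally show ?case
    using Suc q_nonneg by (simp add: mult.assoc order_trans[OF mult_left_mono])
qed (use assms in \<open>simp add: Int_absorb2\<close>)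

lemma measure_recover_then_stay:
  assumes j: "1 \<le> j" "j \<le> \<tau>" and "a + \<tau> \<le> Suc T" and D: "D \<in> sets (F a)"
    and "q \<le> \<xi>" "q \<le> 1"
    and recover: "AE \<omega> in M. \<omega> \<in> D \<longrightarrow> \<xi> \<le> cprob M (F a) (\<lambda>\<omega>. \<omega> \<in> S (a + j)) \<omega>"
  shows "q ^ \<tau> * measure M D \<le> measure M (D \<inter> S (a + \<tau>))"
proof -
  have "{\<omega> \<in> space M. \<omega> \<in> S (a + j)} = S (a + j)"
    using S_events sets.sets_into_space by blast
  then have reach: "\<xi> * measure M D \<le> measure M (D \<inter> S (a + j))"
    using measure_Int_ge_of_cprob_ge[OF prob_space_axioms subalgebra D _ recover] S_events by simp
  have "D \<inter> S (a + j) \<in> sets (F (a + j))"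
    using D sets_F_mono[of a "a + j"] by (intro sets.Int S_sets) auto
  then have "q ^ (\<tau> - j) * measure M (D \<inter> S (a + j))
      \<le> measure M (D \<inter> S (a + j) \<inter> S (a + j + (\<tau> - j)))"
    using assms(3) j by (intro measure_stay_safe) auto
  also have "\<dots> \<le> measure M (D \<inter> S (a + \<tau>))"
    using D S_events sets_F_subset j by (intro finite_measure_mono) auto
  finally have stay: "q ^ (\<tau> - j) * measure M (D \<inter> S (a + j)) \<le> measure M (D \<inter> S (a + \<tau>))" .
  have "q ^ \<tau> = q ^ (\<tau> - j) * q ^ j" using j by (simp flip: power_add)
  also have "\<dots> \<le> q ^ (\<tau> - j) * \<xi>"
    using j \<open>q \<le> \<xi>\<close> \<open>q \<le> 1\<close> q_nonneg power_decreasing[of 1 j q]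
    by (intro mult_left_mono) auto
  finally have "q ^ \<tau> * measure M D \<le> q ^ (\<tau> - j) * (\<xi> * measure M D)"
    by (metis measure_nonneg mult.assoc mult_right_mono)
  also have "\<dots> \<le> q ^ (\<tau> - j) * measure M (D \<inter> S (a + j))"
    using reach q_nonneg by (intro mult_left_mono) auto
  finally show ?thesis using stay by linarith
qed

lemma measure_safe_from_start:
  assumes "S 0 = space M" "K \<le> Suc T"
  shows "q ^ K \<le> measure M (S K)"
  using measure_stay_safe[of 0 K "space M"] assms S_sets[of 0] S_events[of K]
  by (simp add: prob_space sets.Int_space_eq1)

lemma measure_safe_after_recovery:
  assumes "\<tau> < K" "K \<le> Suc T" "q \<le> \<xi>" "q \<le> 1"
    and recovery: "AE \<omega> in M. \<omega> \<notin> S (K - \<tau>) \<longrightarrow>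
      (\<exists>j\<in>{1..\<tau>}. \<xi> \<le> cprob M (F (K - \<tau>)) (\<lambda>\<omega>. \<omega> \<in> S (K - \<tau> + j)) \<omega>)"
  shows "q ^ \<tau> \<le> measure M (S K)"
proof -
  define k where "k = K - \<tau>"
  have K: "k + \<tau> = K" "k + \<tau> \<le> Suc T" using assms by (auto simp: k_def)
  define B where "B i = (if i = 0 then S k
    else {\<omega> \<in> space M. \<xi> \<le> cprob M (F k) (\<lambda>\<omega>. \<omega> \<in> S (k + i)) \<omega>})" for i
  define E where "E = disjointed B"
  have "B i \<in> sets (F k)" for i
  proof (cases "i = 0")
    case False
    interpret sigma_finite_subalgebra M "F k" by (rule subalgebra)
    have "cprob M (F k) (\<lambda>\<omega>. \<omega> \<in> S (k + i)) \<in> borel_measurable (F k)"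
      unfolding cprob_def by (rule borel_measurable_cond_exp)
    then have "{\<omega> \<in> space (F k). \<xi> \<le> cprob M (F k) (\<lambda>\<omega>. \<omega> \<in> S (k + i)) \<omega>} \<in> sets (F k)"
      by measurable
    then show ?thesis using False subalg by (simp add: B_def subalgebra_def)
  qed (simp add: B_def S_sets)
  then have E_sets: "E i \<in> sets (F k)" for i
    using sets.range_disjointed_sets[of B "F k"] unfolding E_def by blast
  then have E_events: "E i \<in> events" for i
    using sets_F_subset by blast
  have piece: "q ^ \<tau> * prob (E i) \<le> prob (E i \<inter> S K)" if "i < Suc \<tau>" for i
  proof (cases i)
    case 0
    then show ?thesis
      using measure_stay_safe[of k \<tau> "E 0"] K S_sets by (simp add: E_def B_def)
  next
    case (Suc j)
    have "AE \<omega> in M. \<omega> \<in> E i \<longrightarrow> \<xi> \<le> cprob M (F k) (\<lambda>\<omega>. \<omega> \<in> S (k + i)) \<omega>"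
      using disjointed_subset[of B i] Suc by (auto simp: E_def B_def intro!: AE_I2)
    then show ?thesis
      using measure_recover_then_stay[of i \<tau> k "E i" \<xi>] that Suc K assms(3,4) E_sets by auto
  qed
  have "(\<Union>i<Suc \<tau>. E i) = (\<Union>i<Suc \<tau>. B i)"
    using finite_UN_disjointed_eq[of B "Suc \<tau>"] by (simp add: E_def atLeast0LessThan)
  moreover have "AE \<omega> in M. \<omega> \<in> (\<Union>i<Suc \<tau>. B i)"
    using recovery AE_space
  proof eventually_elim
    case (elim \<omega>)
    then show ?case
      by (cases "\<omega> \<in> S k") (auto simp: B_def k_def)
  qed
  ultimately have cover: "AE \<omega> in M. \<omega> \<in> (\<Union>i<Suc \<tau>. E i)" by simp
  have disjoint: "disjoint_family_on E {..<Suc \<tau>}"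
    using disjoint_family_disjointed[of B] by (simp add: E_def disjoint_family_on_def)
  show ?thesis
    by (rule prob_ge_of_disjoint_cover[OF _ disjoint _ S_events cover]) (simp_all add: E_events piece)
qed

lemma measure_safe_ge:
  assumes "S 0 = space M" "q \<le> 1" "K \<le> T" and "\<tau> < T \<Longrightarrow> q \<le> \<xi>"
    and recovery: "\<And>k. 1 \<le> k \<Longrightarrow> k \<le> T \<Longrightarrow> AE \<omega> in M. \<omega> \<notin> S k \<longrightarrow>
      (\<exists>j\<in>{1..\<tau>}. \<xi> \<le> cprob M (F k) (\<lambda>\<omega>. \<omega> \<in> S (k + j)) \<omega>)"
  shows "q ^ \<tau> \<le> measure M (S K)"
proof (cases "K \<le> \<tau>")
  case True
  then have "q ^ \<tau> \<le> q ^ K" using assms(2) q_nonneg by (simp add: power_decreasing)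
  also have "\<dots> \<le> measure M (S K)" using assms(1,3) by (intro measure_safe_from_start) auto
  finally show ?thesis .
next
  case False
  then show ?thesis
    using assms recovery[of "K - \<tau>"] by (intro measure_safe_after_recovery[where \<xi> = \<xi>]) auto
qed

end

section \<open>The safe exploration rule\<close>

lemma borel_measurable_matrix_vector_mult [measurable]:
  "f \<in> borel_measurable N \<Longrightarrow> (\<lambda>\<omega>. (A::real^'n^'m) *v f \<omega>) \<in> borel_measurable N"
proof -
  have "continuous_on UNIV (\<lambda>y::real^'n. A *v y)"
    by (simp add: linear_continuous_on linear_conv_bounded_linear)
  then have "(\<lambda>y::real^'n. A *v y) \<in> borel_measurable borel"
    by (rule borel_measurable_continuous_onI)
  then show "f \<in> borel_measurable N \<Longrightarrow> ?thesis" by (simp add: measurable_compose)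
qed

lemma Xs_borel [measurable]: "Xs H d \<in> sets borel"
proof -
  have "Xs H d = (\<Inter>j. {y. H $ j \<bullet> y \<le> d $ j})"
    by (auto simp: Xs_def matrix_vector_mul_component)
  then show ?thesis by (auto intro!: borel_closed closed_INT closed_halfspace_le)
qed

lemma gaussian_exploration_step:
  fixes C :: "'a set" and H :: "real^'n^'c" and A :: "real^'n^'n" and B :: "real^'m^'n"
    and f :: "real^'n \<Rightarrow> real^'n" and G :: "real^'n \<Rightarrow> real^'m^'n"
    and x x' w :: "'a \<Rightarrow> real^'n" and p \<epsilon> :: "'a \<Rightarrow> real^'m" and \<Sigma> :: "'a \<Rightarrow> real^'m^'m"
    and \<eta>' :: real
  assumes "prob_space M" and "sigma_finite_subalgebra M F" and C: "C \<in> sets F"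
    and measurable: "x \<in> borel_measurable F" "p \<in> borel_measurable F"
      "\<epsilon> \<in> borel_measurable M" "w \<in> borel_measurable M" "x' \<in> borel_measurable M"
    and gauss: "\<And>a b t. AE \<omega> in M. cprob M F (\<lambda>\<omega>'. a \<bullet> \<epsilon> \<omega>' + b \<bullet> w \<omega>' \<le> t) \<omega>
      = gauss_cdf (b \<bullet> \<mu>w) (a \<bullet> (\<Sigma> \<omega> *v a) + b \<bullet> (\<Sigma>w *v b)) t"
    and psd: "\<And>\<omega>. psd (\<Sigma> \<omega>)" "psd \<Sigma>w" and \<eta>': "1/2 < \<eta>'" "\<eta>' < 1"
    and covariance: "\<And>\<omega> j. \<omega> \<in> C \<Longrightarrow> norm (H $ j v* (BI B ** msqrt (blockdiag (\<Sigma> \<omega>) \<Sigma>w)))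
      \<le> (1 / Phi_inv \<eta>') * (d $ j - H $ j \<bullet> (A *v x \<omega> + B *v p \<omega> + \<mu>w) - \<delta> $ j)"
    and model_error: "\<And>j z v. \<bar>H $ j \<bullet> (f z + G z *v v - (A *v z + B *v v))\<bar> \<le> \<delta> $ j"
    and dynamics: "\<And>\<omega>. \<omega> \<in> C \<Longrightarrow> x' \<omega> = f (x \<omega>) + G (x \<omega>) *v (p \<omega> + \<epsilon> \<omega>) + w \<omega>"
  shows "(1 - CARD('c) * (1 - \<eta>')) * measure M C
    \<le> measure M (C \<inter> {\<omega> \<in> space M. x' \<omega> \<in> Xs H d})"
proof -
  interpret prob_space M by fact
  interpret sigma_finite_subalgebra M F by fact
  define Z where "Z j \<omega> = (H $ j v* B) \<bullet> \<epsilon> \<omega> + H $ j \<bullet> w \<omega>" for j \<omega>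
  define t where "t j \<omega> = d $ j - H $ j \<bullet> (A *v x \<omega> + B *v p \<omega>) - \<delta> $ j" for j \<omega>
  define v where "v j \<omega> = (H $ j v* B) \<bullet> (\<Sigma> \<omega> *v (H $ j v* B)) + H $ j \<bullet> (\<Sigma>w *v H $ j)" for j \<omega>
  define Good where "Good j = {\<omega> \<in> space M. Z j \<omega> \<le> t j \<omega>}" for j
  have "C \<in> sets M" using C subalg by (meson subalgebra_def subsetD)
  have t_F: "t j \<in> borel_measurable F" for j
    unfolding t_def using measurable(1,2) by measurable
  have Good_sets: "Good j \<in> sets M" for j
    unfolding Good_def Z_def using measurable(3,4) measurable_from_subalg[OF subalg t_F] by measurable
  have "\<eta>' * measure M C \<le> measure M (C \<inter> Good j)" for j
    unfolding Good_def
  proof (rule measure_Int_ge_of_cprob_ge[OF assms(1,2) C])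
    show "{\<omega> \<in> space M. Z j \<omega> \<le> t j \<omega>} \<in> sets M" using Good_sets by (simp add: Good_def)
    have "0 \<le> v j \<omega> \<and> \<eta>' \<le> gauss_cdf (H $ j \<bullet> \<mu>w) (v j \<omega>) (t j \<omega>)" if "\<omega> \<in> C" for \<omega>
    proof
      let ?n = "norm (H $ j v* (BI B ** msqrt (blockdiag (\<Sigma> \<omega>) \<Sigma>w)))"
      have v_eq: "v j \<omega> = ?n\<^sup>2" using norm_BI_msqrt_blockdiag[OF psd] by (simp add: v_def)
      then show "0 \<le> v j \<omega>" by simp
      have "d $ j - H $ j \<bullet> (A *v x \<omega> + B *v p \<omega> + \<mu>w) - \<delta> $ j = t j \<omega> - H $ j \<bullet> \<mu>w"
        by (simp add: t_def inner_add_right)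
      then have "sqrt (v j \<omega>) \<le> (t j \<omega> - H $ j \<bullet> \<mu>w) / Phi_inv \<eta>'"
        using covariance[OF that, of j] v_eq by simp
      then show "\<eta>' \<le> gauss_cdf (H $ j \<bullet> \<mu>w) (v j \<omega>) (t j \<omega>)"
        using \<eta>' \<open>0 \<le> v j \<omega>\<close> by (auto intro: gauss_cdf_ge_of_sqrt_le)
    qed
    moreover have "Z j \<in> borel_measurable M" unfolding Z_def using measurable(3,4) by measurable
    moreover have "AE \<omega> in M. cprob M F (\<lambda>\<omega>'. Z j \<omega>' \<le> r) \<omega> = gauss_cdf (H $ j \<bullet> \<mu>w) (v j \<omega>) r"
      for r
      using gauss unfolding Z_def v_def .
    ultimately show "AE \<omega> in M. \<omega> \<in> C \<longrightarrow> \<eta>' \<le> cprob M F (\<lambda>\<omega>'. Z j \<omega>' \<le> t j \<omega>') \<omega>"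
      by (intro cprob_le_random_threshold_ge[OF assms(1,2) _ t_F, where m = "H $ j \<bullet> \<mu>w" and v = "v j"])
        auto
  qed
  then have "(1 - CARD('c) * (1 - \<eta>')) * measure M C \<le> measure M (C \<inter> (\<Inter>j. Good j))"
    using measure_Int_INT_ge[of UNIV C Good \<eta>'] \<open>C \<in> sets M\<close> Good_sets by simp
  also have "\<dots> \<le> measure M (C \<inter> {\<omega> \<in> space M. x' \<omega> \<in> Xs H d})"
  proof (rule finite_measure_mono)
    show "C \<inter> (\<Inter>j. Good j) \<subseteq> C \<inter> {\<omega> \<in> space M. x' \<omega> \<in> Xs H d}"
    proof
      fix \<omega> assume \<omega>: "\<omega> \<in> C \<inter> (\<Inter>j. Good j)"
      then have "\<omega> \<in> space M" and Zt: "Z j \<omega> \<le> t j \<omega>" for j by (auto simp: Good_def)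
      have "H $ j \<bullet> x' \<omega> \<le> d $ j" for j
      proof -
        let ?u = "p \<omega> + \<epsilon> \<omega>"
        have "H $ j \<bullet> x' \<omega> = H $ j \<bullet> (A *v x \<omega> + B *v ?u) + H $ j \<bullet> w \<omega>
            + H $ j \<bullet> (f (x \<omega>) + G (x \<omega>) *v ?u - (A *v x \<omega> + B *v ?u))"
          using dynamics \<omega> by (simp add: inner_add_right inner_diff_right)
        also have "\<dots> \<le> d $ j"
          using model_error[of j "x \<omega>" ?u] Zt[of j]
          by (simp add: Z_def t_def inner_add_right matrix_vector_right_distrib dot_lmul_matrix)
        finally show ?thesis .
      qed
      then show "\<omega> \<in> C \<inter> {\<omega> \<in> space M. x' \<omega> \<in> Xs H d}"
        using \<omega> \<open>\<omega> \<in> space M\<close> by (simp add: Xs_def matrix_vector_mul_component)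
    qed
    show "C \<inter> {\<omega> \<in> space M. x' \<omega> \<in> Xs H d} \<in> sets M"
      using \<open>C \<in> sets M\<close> measurable(5) by measurable
  qed
  finally show ?thesis .
qed

lemma stage_level_bounds:
  fixes \<eta> \<xi> :: real and \<tau> T k :: nat
  assumes \<eta>: "1/2 < \<eta>" "\<eta> < 1" and \<xi>: "\<eta> powr (1 / real T) < \<xi>" "\<xi> < 1"
    and "0 < \<tau>" "k \<le> T"
  shows "\<eta> powr (1 / real \<tau>) \<le> (\<eta> / \<xi> ^ k) powr (1 / real \<tau>)"
    and "(\<eta> / \<xi> ^ k) powr (1 / real \<tau>) < 1"
    and "1/2 < (\<eta> / \<xi> ^ k) powr (1 / real \<tau>)"
proof -
  have "0 < T" using \<eta> \<xi> by (cases T) auto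
  have "0 < \<eta> powr (1 / real T)" using \<eta> by simp
  then have "0 < \<xi>" using \<xi> by linarith
  have "\<eta> = (\<eta> powr (1 / real T)) ^ T"
    using \<open>0 < T\<close> \<eta> by (simp add: powr_realpow[symmetric] powr_powr)
  also have "\<dots> < \<xi> ^ T" using \<xi> \<open>0 < T\<close> by (intro power_strict_mono) auto
  also have "\<dots> \<le> \<xi> ^ k" using \<xi> \<open>0 < \<xi>\<close> \<open>k \<le> T\<close> by (intro power_decreasing) auto
  finally have lt1: "\<eta> / \<xi> ^ k < 1" using \<open>0 < \<xi>\<close> by simp
  have ge: "\<eta> \<le> \<eta> / \<xi> ^ k"
    using \<xi> \<eta> \<open>0 < \<xi>\<close> by (simp add: le_divide_eq power_le_one)
  then show "\<eta> powr (1 / real \<tau>) \<le> (\<eta> / \<xi> ^ k) powr (1 / real \<tau>)"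
    using \<eta> by (intro powr_mono2) auto
  show "(\<eta> / \<xi> ^ k) powr (1 / real \<tau>) < 1"
    using powr_less_mono2[of "1 / real \<tau>" "\<eta> / \<xi> ^ k" 1] lt1 \<eta> \<open>0 < \<xi>\<close> \<open>0 < \<tau>\<close> by simp
  have "(\<eta> / \<xi> ^ k) powr 1 \<le> (\<eta> / \<xi> ^ k) powr (1 / real \<tau>)"
    by (rule powr_mono') (use lt1 \<eta> \<open>0 < \<xi>\<close> \<open>0 < \<tau>\<close> in auto)
  then have "\<eta> / \<xi> ^ k \<le> (\<eta> / \<xi> ^ k) powr (1 / real \<tau>)"
    using \<eta> \<open>0 < \<xi>\<close> by simp
  then show "1/2 < (\<eta> / \<xi> ^ k) powr (1 / real \<tau>)" using ge \<eta> by linarith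
qed

lemma root_le_if_horizon_root_less:
  fixes \<eta> \<xi> :: real and \<tau> T :: nat
  assumes "0 < \<eta>" "\<eta> < 1" "\<eta> powr (1 / real T) < \<xi>" "0 < \<tau>" "\<tau> \<le> T"
  shows "\<eta> powr (1 / real \<tau>) \<le> \<xi>"
proof -
  have "\<eta> powr (1 / real \<tau>) \<le> \<eta> powr (1 / real T)"
    using assms by (intro powr_mono') (auto simp: frac_le)
  then show ?thesis using assms(3) by simp
qed

lemma union_bound_level:
  fixes q :: real and n :: nat
  assumes "1/2 < q" "q < 1" "0 < n"
  shows "1/2 < 1 - (1 - q) / n" "1 - (1 - q) / n < 1" "1 - n * (1 - (1 - (1 - q) / n)) = q"
  using assms by (auto simp: field_simps)

theorem theorem2:
  fixes M :: "'a measure"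
    and F :: "nat \<Rightarrow> 'a measure"
    and T :: nat and \<tau> :: nat
    and \<eta> \<xi> :: real
    and f :: "real^'n \<Rightarrow> real^'n"
    and G :: "real^'n \<Rightarrow> real^'m^'n"
    and A :: "real^'n^'n" and B :: "real^'m^'n"
    and H :: "real^'n^'c" and d :: "real^'c"
    and \<delta>bar \<Delta>bar :: "real^'c"
    and \<mu>w :: "real^'n" and \<Sigma>w :: "real^'n^'n"
    and \<mu> :: "real^'n \<Rightarrow> 'p \<Rightarrow> real^'m"
    and \<theta> :: "nat \<Rightarrow> 'a \<Rightarrow> 'p"
    and x w :: "nat \<Rightarrow> 'a \<Rightarrow> real^'n"
    and u \<epsilon> ustay uback :: "nat \<Rightarrow> 'a \<Rightarrow> real^'m"
    and \<Sigma> :: "nat \<Rightarrow> 'a \<Rightarrow> real^'m^'m"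
  defines "e \<equiv> (\<lambda>z v. f z + G z *v v - (A *v z + B *v v))"
    and "xnext \<equiv> (\<lambda>k \<omega>. A *v x k \<omega> + B *v \<mu> (x k \<omega>) (\<theta> k \<omega>) + \<mu>w)"
    and "\<eta>' \<equiv> (\<lambda>k. 1 - (1 - (\<eta> / \<xi> ^ k) powr (1 / real \<tau>)) / real CARD('c))"
    and "condi \<equiv> (\<lambda>k \<omega>. x k \<omega> \<in> Xs H d \<and>
           (\<forall>j. \<forall>\<delta>\<in>{\<delta>bar $ j, - \<delta>bar $ j}.
              norm ((H $ j) v* msqrt \<Sigma>w)
                \<le> (1 / Phi_inv (1 - (1 - (\<eta> / \<xi> ^ k) powr (1 / real \<tau>)) / real CARD('c)))
                   * (d $ j - (H $ j) \<bullet> (A *v x k \<omega> + B *v \<mu> (x k \<omega>) (\<theta> k \<omega>) + \<mu>w) - \<delta>)))"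
  assumes prob: "prob_space M"
    \<comment> \<open>information structure: a filtration to which state, policy and covariance are adapted\<close>
    and filt: "\<And>k. sigma_finite_subalgebra M (F k)"
    and filt_mono: "\<And>k. sets (F k) \<subseteq> sets (F (Suc k))"
    and x_meas: "\<And>k. x k \<in> borel_measurable (F k)"
    and pol_meas: "\<And>k. (\<lambda>\<omega>. \<mu> (x k \<omega>) (\<theta> k \<omega>)) \<in> borel_measurable (F k)"
    and \<Sigma>_meas: "\<And>k. \<Sigma> k \<in> borel_measurable (F k)"
    and w_meas: "\<And>k. w k \<in> borel_measurable M"
    and \<epsilon>_meas: "\<And>k. \<epsilon> k \<in> borel_measurable M"
    \<comment> \<open>eta in (0.5,1), xi with eta^(1/T) < xi < 1, tau positive\<close>
    and \<eta>_gt: "1/2 < \<eta>" and \<eta>_lt: "\<eta> < 1"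
    and \<xi>_gt: "\<eta> powr (1 / real T) < \<xi>" and \<xi>_lt: "\<xi> < 1"
    and \<tau>_pos: "0 < \<tau>"
    \<comment> \<open>dynamics and initial condition\<close>
    and dyn: "\<And>k \<omega>. k \<le> T \<Longrightarrow> x (Suc k) \<omega> = f (x k \<omega>) + G (x k \<omega>) *v u k \<omega> + w k \<omega>"
    and x0: "\<And>\<omega>. x 0 \<omega> \<in> Xs H d"
    \<comment> \<open>(A2) and (i): conditional joint Gaussianity of exploration and noise given the past\<close>
    and \<Sigma>w_psd: "psd \<Sigma>w"
    and \<Sigma>_psd: "\<And>k \<omega>. psd (\<Sigma> k \<omega>)"
    and gauss: "\<And>k a b t. k \<le> T \<Longrightarrow>
       AE \<omega> in M. cprob M (F k) (\<lambda>\<omega>'. a \<bullet> \<epsilon> k \<omega>' + b \<bullet> w k \<omega>' \<le> t) \<omega>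
          = gauss_cdf (b \<bullet> \<mu>w) (a \<bullet> (\<Sigma> k \<omega> *v a) + b \<bullet> (\<Sigma>w *v b)) t"
    \<comment> \<open>(A3)\<close>
    and A3a: "\<And>j z v. \<bar>(H $ j) \<bullet> e z v\<bar> \<le> \<delta>bar $ j"
    and A3b: "\<And>j z v. \<bar>(H $ j) \<bullet> ((\<Sum>i<\<tau>. matpow A i) *v e z v)\<bar> \<le> \<Delta>bar $ j"
    \<comment> \<open>(A4)\<close>
    and A4: "\<And>j. (H $ j) v* B \<noteq> 0"
    \<comment> \<open>(i): choice of the exploration covariance\<close>
    and \<Sigma>_cond: "\<And>k \<omega> j \<delta>. k \<le> T \<Longrightarrow> condi k \<omega> \<Longrightarrow> \<delta> \<in> {\<delta>bar $ j, - \<delta>bar $ j} \<Longrightarrow>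
       norm ((H $ j) v* (BI B ** msqrt (blockdiag (\<Sigma> k \<omega>) \<Sigma>w)))
         \<le> (1 / Phi_inv (\<eta>' k)) * (d $ j - (H $ j) \<bullet> xnext k \<omega> - \<delta>)"
    \<comment> \<open>input selection rule (i)/(ii)/(iii)\<close>
    and input_rule: "\<And>k \<omega>. k \<le> T \<Longrightarrow> u k \<omega> =
       (if x k \<omega> \<in> Xs H d
        then (if condi k \<omega> then \<mu> (x k \<omega>) (\<theta> k \<omega>) + \<epsilon> k \<omega> else ustay k \<omega>)
        else uback k \<omega>)"
    \<comment> \<open>conservative input of the first kind\<close>
    and cons_stay: "\<And>k. k \<le> T \<Longrightarrow>
       AE \<omega> in M. (x k \<omega> \<in> Xs H d \<and> \<not> condi k \<omega>) \<longrightarrow>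
          (\<eta> / \<xi> ^ k) powr (1 / real \<tau>) \<le> cprob M (F k) (\<lambda>\<omega>'. x (Suc k) \<omega>' \<in> Xs H d) \<omega>"
    \<comment> \<open>conservative inputs of the second kind\<close>
    and cons_back: "\<And>k. 1 \<le> k \<Longrightarrow> k \<le> T \<Longrightarrow>
       AE \<omega> in M. x k \<omega> \<notin> Xs H d \<longrightarrow>
          (\<exists>j\<in>{1..\<tau>}. \<xi> \<le> cprob M (F k) (\<lambda>\<omega>'. x (k + j) \<omega>' \<in> Xs H d) \<omega>)"
  shows "\<forall>k\<in>{1..T}. \<eta> \<le> measure M {\<omega> \<in> space M. x k \<omega> \<in> Xs H d}"
proof -
  interpret prob_space M by (rule prob)
  have space_F: "space (F k) = space M" and sets_F: "sets (F k) \<subseteq> sets M" for k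
    using filt[of k] by (auto simp: sigma_finite_subalgebra_def subalgebra_def)
  define S where "S k = {\<omega> \<in> space M. x k \<omega> \<in> Xs H d}" for k
  define q where "q = \<eta> powr (1 / real \<tau>)"
  have q: "0 \<le> q" "q \<le> 1" "q ^ \<tau> = \<eta>"
    using \<eta>_gt \<eta>_lt \<tau>_pos by (auto simp: q_def powr_le1 powr_realpow[symmetric] powr_powr)
  have S_F: "S k \<in> sets (F k)" for k
  proof -
    have "{\<omega> \<in> space (F k). x k \<omega> \<in> Xs H d} \<in> sets (F k)" using x_meas by measurable
    then show ?thesis by (simp add: S_def space_F)
  qed
  have step: "q * measure M C \<le> measure M (C \<inter> S (Suc k))"
    if "k \<le> T" "C \<in> sets (F k)" "C \<subseteq> S k" for k C
  proof -
    define q\<^sub>k where "q\<^sub>k = (\<eta> / \<xi> ^ k) powr (1 / real \<tau>)"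
    note level = stage_level_bounds[OF \<eta>_gt \<eta>_lt \<xi>_gt \<xi>_lt \<tau>_pos \<open>k \<le> T\<close>, folded q_def q\<^sub>k_def]
    have \<eta>'k: "1/2 < \<eta>' k" "\<eta>' k < 1" "1 - CARD('c) * (1 - \<eta>' k) = q\<^sub>k"
      using union_bound_level[OF level(3,2), of "CARD('c)"] by (simp_all add: \<eta>'_def q\<^sub>k_def)
    define E where "E = C \<inter> {\<omega> \<in> space M. condi k \<omega>}"
    have "{\<omega> \<in> space (F k). condi k \<omega>} \<in> sets (F k)"
      unfolding condi_def using x_meas pol_meas by measurable
    then have E_F: "E \<in> sets (F k)" and E_C_F: "C - E \<in> sets (F k)"
      using \<open>C \<in> sets (F k)\<close> by (auto simp: E_def space_F Diff_Int)
    have x_Suc: "x (Suc k) \<in> borel_measurable M"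
      using measurable_from_subalg[OF _ x_meas] filt by (auto simp: sigma_finite_subalgebra_def)
    have explore: "q\<^sub>k * measure M E \<le> measure M (E \<inter> S (Suc k))"
      unfolding S_def \<eta>'k(3)[symmetric]
    proof (rule gaussian_exploration_step[OF prob filt E_F x_meas pol_meas \<epsilon>_meas w_meas x_Suc
          gauss[OF \<open>k \<le> T\<close>] \<Sigma>_psd \<Sigma>w_psd \<eta>'k(1,2) _ A3a[unfolded e_def]])
      fix \<omega> j assume "\<omega> \<in> E"
      then have "condi k \<omega>" "x k \<omega> \<in> Xs H d" by (auto simp: E_def condi_def)
      then show "norm (H $ j v* (BI B ** msqrt (blockdiag (\<Sigma> k \<omega>) \<Sigma>w))) \<le> (1 / Phi_inv (\<eta>' k))
          * (d $ j - H $ j \<bullet> (A *v x k \<omega> + B *v \<mu> (x k \<omega>) (\<theta> k \<omega>) + \<mu>w) - \<delta>bar $ j)"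
        using \<Sigma>_cond[OF \<open>k \<le> T\<close>, of \<omega> "\<delta>bar $ j" j] by (simp add: xnext_def)
      show "x (Suc k) \<omega> = f (x k \<omega>) + G (x k \<omega>) *v (\<mu> (x k \<omega>) (\<theta> k \<omega>) + \<epsilon> k \<omega>) + w k \<omega>"
        using dyn[OF \<open>k \<le> T\<close>] input_rule[OF \<open>k \<le> T\<close>] \<open>condi k \<omega>\<close> \<open>x k \<omega> \<in> Xs H d\<close> by simp
    qed
    have stay: "q\<^sub>k * measure M (C - E) \<le> measure M ((C - E) \<inter> S (Suc k))"
      unfolding S_def
    proof (rule measure_Int_ge_of_cprob_ge[OF prob filt E_C_F])
      show "{\<omega> \<in> space M. x (Suc k) \<omega> \<in> Xs H d} \<in> sets M" using x_Suc by measurable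
      show "AE \<omega> in M. \<omega> \<in> C - E \<longrightarrow> q\<^sub>k \<le> cprob M (F k) (\<lambda>\<omega>'. x (Suc k) \<omega>' \<in> Xs H d) \<omega>"
        using cons_stay[OF \<open>k \<le> T\<close>]
      proof eventually_elim
        case (elim \<omega>)
        then show ?case using \<open>C \<subseteq> S k\<close> by (auto simp: E_def S_def q\<^sub>k_def)
      qed
    qed
    have "E \<in> sets M" "C - E \<in> sets M" "E \<subseteq> C" "S (Suc k) \<in> sets M"
      using E_F E_C_F S_F sets_F by (auto simp: E_def)
    then have "q\<^sub>k * measure M C \<le> measure M (C \<inter> S (Suc k))"
      using explore stay by (rule measure_Int_ge_of_partition)
    moreover have "q * measure M C \<le> q\<^sub>k * measure M C"
      using level(1) by (intro mult_right_mono) auto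
    ultimately show ?thesis by linarith
  qed
  interpret safety_process M F S T q
    unfolding safety_process_def safety_process_axioms_def
    using prob filt filt_mono S_F q(1) step by blast
  have cprob_S: "cprob M (F k) (\<lambda>\<omega>. \<omega> \<in> S i) = cprob M (F k) (\<lambda>\<omega>. x i \<omega> \<in> Xs H d)" for k i
    by (simp add: cprob_def S_def conj_commute)
  have "\<eta> \<le> measure M (S K)" if "K \<in> {1..T}" for K
    unfolding q(3)[symmetric]
  proof (rule measure_safe_ge)
    show "S 0 = space M" using x0 by (auto simp: S_def)
    show "q \<le> \<xi>" if "\<tau> < T"
      using root_le_if_horizon_root_less \<eta>_gt \<eta>_lt \<xi>_gt \<tau>_pos that by (simp add: q_def)
    show "AE \<omega> in M. \<omega> \<notin> S k \<longrightarrow> (\<exists>j\<in>{1..\<tau>}. \<xi> \<le> cprob M (F k) (\<lambda>\<omega>. \<omega> \<in> S (k + j)) \<omega>)"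
      if "1 \<le> k" "k \<le> T" for k
      unfolding cprob_S using cons_back[OF that] AE_space by eventually_elim (auto simp: S_def)
  qed (use q that in auto)
  then show ?thesis by (simp add: S_def)
qed

end
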